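(* For $0<x<1$, as power series in $t$ (convergent for $t$ near $0$), \[ \sum_{n=0}^\infty p_{n-1}(x)\frac{t^n}{n!} = \frac{e^{(1-x)t}\left(\arcsin\!\big(x^{1/2}e^{(1-x)t}\big) - \arcsin\!\big(x^{1/2}\big)\right)}{x^{1/2}\left(1-xe^{2(1-x)t}\right)^{1/2}}. \]
   Context: Define polynomial sequences $(p_k(x))_{k\ge -1}$ and $(q_k(x))_{k\ge -1}$ by $p_{-1}(x)=0$, $q_{-1}(x)=1$ and, for $k\ge -1$, $p_{k+1}(x) = 2(kx+1)p_k(x) + 2x(1-x)p_k'(x) + q_k(x)$, $q_{k+1}(x) = (2(k+1)x+1)q_k(x) + 2x(1-x)q_k'(x)$. *)

theory Defs
  imports "HOL-Analysis.Analysis" "HOL-Computational_Algebra.Polynomial"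
begin

text \<open>Shifted indexing: pq n = (p_{n-1}, q_{n-1}), so that pq 0 = (p_{-1}, q_{-1}) = (0, 1).
  The recurrence with k = n - 1 (k ranges over k >= -1):
  p_{k+1} = 2(kx+1) p_k + 2x(1-x) p_k' + q_k,
  q_{k+1} = (2(k+1)x+1) q_k + 2x(1-x) q_k'.\<close>

fun pq :: "nat \<Rightarrow> real poly \<times> real poly" where
  "pq 0 = (0, 1)"
| "pq (Suc n) =
     (let (p, q) = pq n in
       ([:2, 2 * (real n - 1):] * p + [:0, 2, -2:] * pderiv p + q,
        [:1, 2 * real n:] * q + [:0, 2, -2:] * pderiv q))"

definition pshift :: "nat \<Rightarrow> real poly" where "pshift n = fst (pq n)"
definition qshift :: "nat \<Rightarrow> real poly" where "qshift n = snd (pq n)"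

end

theory Submission
  imports Defs "HOL-Complex_Analysis.Complex_Analysis"
begin

(* The function G(w) = sqrt w / sqrt (1 - w) * (arcsin (sqrt w) - arcsin (sqrt x)) solves
   2 w (1 - w) G' = G + w and vanishes at w = x. The recurrences for p and q are exactly what makes
   K_n(w) = (q_(n-1)(w) G(w) + w p_(n-1)(w)) / (1 - w)^n satisfy 2 w K_n' = K_(n+1).
   Along w = x exp (2 (1 - x) z) this becomes d/dz ((1 - x)^n K_n / x) = (1 - x)^(n+1) K_(n+1) / x,
   so the n-th derivative at z = 0 of G(x exp (2 (1 - x) z)) / x, which is holomorphic near 0
   because 0 < Re w < 1 there, equals p_(n-1)(x), and its Taylor series is the claimed one. *)

lemma map_poly_of_real_add:
  "map_poly of_real (p + q) = map_poly of_real p + (map_poly of_real q :: 'a::real_field poly)"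
  by (rule poly_eqI) (simp add: coeff_map_poly)

lemma map_poly_of_real_mult:
  "map_poly of_real (p * q) = map_poly of_real p * (map_poly of_real q :: 'a::real_field poly)"
  by (rule poly_eqI) (simp add: coeff_map_poly coeff_mult)

lemma pderiv_map_poly_of_real:
  "pderiv (map_poly of_real p) = (map_poly of_real (pderiv p) :: 'a::real_field poly)"
  by (rule poly_eqI) (simp add: coeff_map_poly coeff_pderiv)

lemma poly_map_poly_of_real:
  "poly (map_poly of_real p) (of_real x) = (of_real (poly p x) :: 'a::real_field)"
  by (induction p) (auto simp: map_poly_pCons)

lemma pshift_Suc:
  "pshift (Suc n) = [:2, 2 * (real n - 1):] * pshift n + [:0, 2, -2:] * pderiv (pshift n) + qshift n"
  by (simp add: pshift_def qshift_def split: prod.split)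

lemma qshift_Suc: "qshift (Suc n) = [:1, 2 * real n:] * qshift n + [:0, 2, -2:] * pderiv (qshift n)"
  by (simp add: qshift_def split: prod.split)

definition peval :: "nat \<Rightarrow> complex \<Rightarrow> complex" where
  "peval n = poly (map_poly of_real (pshift n))"

definition qeval :: "nat \<Rightarrow> complex \<Rightarrow> complex" where
  "qeval n = poly (map_poly of_real (qshift n))"

lemma deriv_peval: "deriv (peval n) w = poly (pderiv (map_poly of_real (pshift n))) w"
  unfolding peval_def by (rule DERIV_imp_deriv) (rule poly_DERIV)

lemma deriv_qeval: "deriv (qeval n) w = poly (pderiv (map_poly of_real (qshift n))) w"
  unfolding qeval_def by (rule DERIV_imp_deriv) (rule poly_DERIV)

lemma peval_has_field_derivative: "(peval n has_field_derivative deriv (peval n) w) (at w)"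
  unfolding deriv_peval unfolding peval_def by (rule poly_DERIV)

lemma qeval_has_field_derivative: "(qeval n has_field_derivative deriv (qeval n) w) (at w)"
  unfolding deriv_qeval unfolding qeval_def by (rule poly_DERIV)

lemma peval_0: "peval 0 w = 0"
  by (simp add: peval_def pshift_def)

lemma qeval_0: "qeval 0 w = 1"
  by (simp add: qeval_def qshift_def)

lemma peval_of_real: "peval n (of_real x) = of_real (poly (pshift n) x)"
  by (simp add: peval_def poly_map_poly_of_real)

lemma peval_Suc:
  "peval (Suc n) w =
     (2 * (1 - w) + 2 * of_nat n * w) * peval n w + 2 * w * (1 - w) * deriv (peval n) w + qeval n w"
  unfolding deriv_peval unfolding peval_def qeval_def pshift_Suc map_poly_of_real_add map_poly_of_real_mult
    pderiv_map_poly_of_real [symmetric]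
  by (simp add: map_poly_pCons algebra_simps)

lemma qeval_Suc:
  "qeval (Suc n) w = (1 + 2 * of_nat n * w) * qeval n w + 2 * w * (1 - w) * deriv (qeval n) w"
  unfolding deriv_qeval unfolding qeval_def qshift_Suc map_poly_of_real_add map_poly_of_real_mult
    pderiv_map_poly_of_real [symmetric]
  by (simp add: map_poly_pCons algebra_simps)

definition arcsin_quot :: "complex \<Rightarrow> complex \<Rightarrow> complex" where
  "arcsin_quot c w = csqrt w / csqrt (1 - w) * (Arcsin (csqrt w) - c)"

lemma arcsin_quot_has_field_derivative:
  assumes "0 < Re w" "Re w < 1"
  shows "(arcsin_quot c has_field_derivative (arcsin_quot c w + w) / (2 * w * (1 - w))) (at w)"
proof -
  define s r where "s = csqrt w" and "r = csqrt (1 - w)"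
  have nonpos: "w \<notin> \<real>\<^sub>\<le>\<^sub>0" "1 - w \<notin> \<real>\<^sub>\<le>\<^sub>0"
    using assms by (auto simp: complex_nonpos_Reals_iff)
  have s2: "w = s\<^sup>2" and r2: "1 - w = r\<^sup>2"
    by (simp_all add: s_def r_def)
  have "w \<noteq> 0" "w \<noteq> 1"
    using assms by auto
  then have "s \<noteq> 0" "r \<noteq> 0"
    unfolding s_def r_def by auto
  have ds: "(csqrt has_field_derivative 1 / (2 * s)) (at w)"
    using has_field_derivative_csqrt [OF nonpos(1)] by (simp add: s_def inverse_eq_divide)
  have dr: "((\<lambda>w. csqrt (1 - w)) has_field_derivative - 1 / (2 * r)) (at w)"
    unfolding r_def using nonpos(2) by (auto intro!: derivative_eq_intros)
  have "cos (Arcsin s) = r"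
    using cos_Arcsin [of s] csqrt_principal [of w] by (auto simp: s_def r_def)
  moreover have "\<bar>Re s\<bar> < 1" if "Im s = 0"
  proof -
    have "w = of_real ((Re s)\<^sup>2)"
      using s2 that by (metis complex_is_Real_iff of_real_Re of_real_power)
    then show ?thesis
      using assms by (simp add: abs_square_less_1)
  qed
  ultimately have "(Arcsin has_field_derivative 1 / r) (at s)"
    using has_field_derivative_Arcsin [of s] by (simp add: inverse_eq_divide)
  from DERIV_chain2 [OF this [unfolded s_def] ds]
  have dA: "((\<lambda>w. Arcsin (csqrt w)) has_field_derivative 1 / r * (1 / (2 * s))) (at w)"
    by (simp add: s_def)
  have "(arcsin_quot c has_field_derivative
      (1 / (2 * s) * r - s * (- 1 / (2 * r))) / (r * r) * (Arcsin s - c) + (1 / r * (1 / (2 * s)) - 0) * (s / r))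
      (at w)"
    unfolding arcsin_quot_def [abs_def]
    using DERIV_mult [OF DERIV_divide [OF ds dr \<open>r \<noteq> 0\<close> [unfolded r_def]] DERIV_diff [OF dA DERIV_const]]
    unfolding s_def [symmetric] r_def [symmetric] .
  moreover have "1 / (2 * s) * r - s * (- 1 / (2 * r)) = 1 / (2 * s * r)"
  proof -
    have "r\<^sup>2 + s\<^sup>2 = 1"
      using s2 r2 by (metis diff_add_cancel)
    then show ?thesis
      using \<open>s \<noteq> 0\<close> \<open>r \<noteq> 0\<close> by (simp add: field_simps power2_eq_square)
  qed
  moreover have "1 / (2 * s * r) / (r * r) * (Arcsin s - c) + (1 / r * (1 / (2 * s)) - 0) * (s / r)
      = (arcsin_quot c w + w) / (2 * w * (1 - w))"
    unfolding arcsin_quot_def s_def [symmetric] r_def [symmetric] unfolding r2 unfolding s2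
    using \<open>s \<noteq> 0\<close> \<open>r \<noteq> 0\<close> by (simp add: field_simps power2_eq_square)
  ultimately show ?thesis
    by simp
qed

definition ladder :: "complex \<Rightarrow> nat \<Rightarrow> complex \<Rightarrow> complex" where
  "ladder c n w = (qeval n w * arcsin_quot c w + w * peval n w) / (1 - w) ^ n"

lemma ladder_has_field_derivative:
  assumes "0 < Re w" "Re w < 1"
  shows "(ladder c n has_field_derivative ladder c (Suc n) w / (2 * w)) (at w)"
proof -
  define v where "v = 1 - w"
  have "w \<noteq> 0" "v \<noteq> 0"
    using assms by (auto simp: v_def)
  have power_deriv: "of_nat n * ((0 - 1) * v ^ (n - Suc 0)) = - of_nat n * v ^ n / v"
    using \<open>v \<noteq> 0\<close> by (cases n) (simp_all add: field_simps)
  have key: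
    "((q' * g + (g + w) / (2 * w * v) * q + (1 * p + p' * w)) * v ^ n
        - (q * g + w * p) * (- of_nat n * v ^ n / v)) / (v ^ n * v ^ n)
      = (((1 + 2 * of_nat n * w) * q + 2 * w * v * q') * g
         + w * ((2 * v + 2 * of_nat n * w) * p + 2 * w * v * p' + q)) / (v * v ^ n) / (2 * w)"
    for g p q p' q' :: complex
    using \<open>w \<noteq> 0\<close> \<open>v \<noteq> 0\<close> by (simp add: field_simps)
  show ?thesis
    unfolding ladder_def [abs_def] v_def [symmetric]
    by (rule derivative_eq_intros arcsin_quot_has_field_derivative [OF assms, folded v_def]
        peval_has_field_derivative qeval_has_field_derivative refl)+
      (simp_all only: v_def [symmetric] power_deriv power_Suc peval_Suc qeval_Suc key, simp add: \<open>v \<noteq> 0\<close>)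
qed

lemma ladder_exp_has_field_derivative:
  assumes "0 < Re (x * exp (2 * a * z))" "Re (x * exp (2 * a * z)) < 1"
  shows "((\<lambda>z. a ^ n * ladder c n (x * exp (2 * a * z))) has_field_derivative
           a ^ Suc n * ladder c (Suc n) (x * exp (2 * a * z))) (at z)"
proof -
  have "x * exp (2 * a * z) \<noteq> 0"
    using assms by auto
  have "((\<lambda>z. x * exp (2 * a * z)) has_field_derivative 2 * a * (x * exp (2 * a * z))) (at z)"
    by (auto intro!: derivative_eq_intros)
  from DERIV_chain2 [OF _ this, OF ladder_has_field_derivative [OF assms]]
  have "((\<lambda>z. ladder c n (x * exp (2 * a * z))) has_field_derivative
      a * ladder c (Suc n) (x * exp (2 * a * z))) (at z)"
    by (rule DERIV_cong) (use \<open>x * exp (2 * a * z) \<noteq> 0\<close> in \<open>simp add: field_simps\<close>)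
  from DERIV_cmult [OF this, of "a ^ n"] show ?thesis
    by (simp add: ac_simps)
qed

lemma sums_of_derivative_sequence:
  fixes f :: "nat \<Rightarrow> complex \<Rightarrow> complex"
  assumes deriv: "\<And>n z. z \<in> ball \<xi> r \<Longrightarrow> (f n has_field_derivative f (Suc n) z) (at z)"
    and z: "z \<in> ball \<xi> r"
  shows "(\<lambda>n. f n \<xi> / fact n * (z - \<xi>) ^ n) sums f 0 z"
proof -
  have higher_deriv: "(deriv ^^ n) (f 0) u = f n u" if "u \<in> ball \<xi> r" for n u
    using that
  proof (induction n arbitrary: u)
    case 0
    then show ?case by simp
  next
    case (Suc n)
    have "\<forall>\<^sub>F v in nhds u. (deriv ^^ n) (f 0) v = f n v"
      using eventually_nhds_in_open [OF open_ball Suc.prems] by eventually_elim (rule Suc.IH)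
    then have "(deriv ^^ Suc n) (f 0) u = deriv (f n) u"
      by (simp add: deriv_cong_ev)
    also have "\<dots> = f (Suc n) u"
      by (rule DERIV_imp_deriv [OF deriv [OF Suc.prems]])
    finally show ?case .
  qed
  have holomorphic: "f 0 holomorphic_on ball \<xi> r"
    unfolding holomorphic_on_open [OF open_ball] using deriv by blast
  have center: "(deriv ^^ n) (f 0) \<xi> = f n \<xi>" for n
    using z by (intro higher_deriv) (auto intro: le_less_trans [OF zero_le_dist])
  show ?thesis
    using holomorphic_power_series [OF holomorphic z] by (simp add: center)
qed

lemma exp_scaled_Re_in_unit_interval:
  fixes x :: real
  assumes "0 < x" "x < 1"
  obtains \<delta> where "\<delta> > 0"
    "\<And>z. z \<in> ball 0 \<delta> \<Longrightarrow> 0 < Re (of_real x * exp (b * z)) \<and> Re (of_real x * exp (b * z)) < 1"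
proof -
  have "isCont (\<lambda>z. of_real x * exp (b * z)) 0"
    by (intro continuous_intros)
  moreover have "min x (1 - x) > 0"
    using assms by simp
  ultimately obtain \<delta> where "\<delta> > 0"
    and close: "\<And>z. dist z 0 < \<delta> \<Longrightarrow> dist (of_real x * exp (b * z)) (of_real x) < min x (1 - x)"
    unfolding continuous_at_eps_delta by fastforce
  show ?thesis
  proof (rule that [OF \<open>\<delta> > 0\<close>])
    fix z :: complex
    assume "z \<in> ball 0 \<delta>"
    then have "\<bar>Re (of_real x * exp (b * z)) - x\<bar> < min x (1 - x)"
      using close [of z] abs_Re_le_cmod [of "of_real x * exp (b * z) - of_real x"]
      by (simp add: dist_norm dist_commute)
    then show "0 < Re (of_real x * exp (b * z)) \<and> Re (of_real x * exp (b * z)) < 1"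
      by auto
  qed
qed

lemma arcsin_quot_of_real:
  assumes "0 \<le> y" "y < 1"
  shows "arcsin_quot (of_real \<theta>) (of_real y) = of_real (sqrt y / sqrt (1 - y) * (arcsin (sqrt y) - \<theta>))"
proof -
  have "\<bar>sqrt y\<bar> \<le> 1"
    using assms by simp
  then show ?thesis
    using assms by (simp add: arcsin_quot_def csqrt_of_real of_real_arcsin)
qed

lemma ladder_0_of_real_exp:
  fixes x t :: real
  assumes "0 < x" "x * exp (2 * (1 - x) * t) < 1"
  shows "ladder (of_real (arcsin (sqrt x))) 0 (of_real x * exp (2 * of_real (1 - x) * of_real t)) / of_real x
    = of_real (exp ((1 - x) * t) * (arcsin (sqrt x * exp ((1 - x) * t)) - arcsin (sqrt x))
        / (sqrt x * sqrt (1 - x * exp (2 * (1 - x) * t))))"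
proof -
  define y where "y = x * exp (2 * (1 - x) * t)"
  have "0 < y" "y < 1"
    using assms by (simp_all add: y_def)
  have "sqrt y = sqrt x * exp ((1 - x) * t)"
  proof -
    have "exp (2 * (1 - x) * t) = (exp ((1 - x) * t))\<^sup>2"
      by (simp add: mult.assoc flip: exp_of_nat_mult)
    then show ?thesis
      by (simp add: y_def real_sqrt_mult)
  qed
  have "of_real x * exp (2 * of_real (1 - x) * of_real t) = (of_real y :: complex)"
    by (simp add: y_def flip: exp_of_real)
  then have "ladder (of_real (arcsin (sqrt x))) 0 (of_real x * exp (2 * of_real (1 - x) * of_real t)) / of_real x
      = of_real (sqrt y / sqrt (1 - y) * (arcsin (sqrt y) - arcsin (sqrt x)) / x)"
    using \<open>0 < y\<close> \<open>y < 1\<close> by (simp add: ladder_def qeval_0 peval_0 arcsin_quot_of_real)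
  also have "sqrt y / sqrt (1 - y) * (arcsin (sqrt y) - arcsin (sqrt x)) / x
      = exp ((1 - x) * t) * (arcsin (sqrt x * exp ((1 - x) * t)) - arcsin (sqrt x)) / (sqrt x * sqrt (1 - y))"
  proof -
    have "r * e / s * B / (r * r) = e * B / (r * s)" if "r \<noteq> 0" "s \<noteq> 0" for r e s B :: real
      using that by (simp add: field_simps)
    from this [of "sqrt x" "sqrt (1 - y)" "exp ((1 - x) * t)"] show ?thesis
      using assms \<open>y < 1\<close> unfolding \<open>sqrt y = sqrt x * exp ((1 - x) * t)\<close> by simp
  qed
  finally show ?thesis
    by (simp add: y_def)
qed

theorem proposition3p3:
  fixes x :: real
  assumes "0 < x" and "x < 1"
  shows "\<exists>\<delta>>0. \<forall>t::real. \<bar>t\<bar> < \<delta> \<longrightarrow>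
           (\<lambda>n. poly (pshift n) x * t ^ n / fact n) sums
             (exp ((1 - x) * t) * (arcsin (sqrt x * exp ((1 - x) * t)) - arcsin (sqrt x))
              / (sqrt x * sqrt (1 - x * exp (2 * (1 - x) * t))))"
proof -
  define rhs where "rhs t = exp ((1 - x) * t) * (arcsin (sqrt x * exp ((1 - x) * t)) - arcsin (sqrt x))
    / (sqrt x * sqrt (1 - x * exp (2 * (1 - x) * t)))" for t
  define c where "c = complex_of_real (arcsin (sqrt x))"
  define a where "a = complex_of_real (1 - x)"
  define f where "f n z = a ^ n * ladder c n (of_real x * exp (2 * a * z)) / of_real x" for n z
  obtain \<delta> where "\<delta> > 0" and strip:
    "\<And>z. z \<in> ball 0 \<delta> \<Longrightarrow> 0 < Re (of_real x * exp (2 * a * z)) \<and> Re (of_real x * exp (2 * a * z)) < 1"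
    using exp_scaled_Re_in_unit_interval [OF assms] by blast
  have "(f n has_field_derivative f (Suc n) z) (at z)" if "z \<in> ball 0 \<delta>" for n z
    unfolding f_def using strip [OF that] by (intro DERIV_cdivide ladder_exp_has_field_derivative) auto
  then have series: "(\<lambda>n. f n 0 / fact n * z ^ n) sums f 0 z" if "z \<in> ball 0 \<delta>" for z
    using sums_of_derivative_sequence [OF _ that] by simp
  have "arcsin_quot c (of_real x) = 0"
    using assms by (simp add: c_def arcsin_quot_of_real)
  then have at_center: "f n 0 = of_real (poly (pshift n) x)" for n
    using assms by (simp add: f_def ladder_def a_def peval_of_real)
  have at_real: "f 0 (of_real t) = of_real (rhs t)" if "\<bar>t\<bar> < \<delta>" for t
  proof -
    have "of_real x * exp (2 * a * of_real t) = of_real (x * exp (2 * (1 - x) * t))"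
      by (simp add: a_def flip: exp_of_real)
    from strip [of "of_real t", unfolded this] have "x * exp (2 * (1 - x) * t) < 1"
      using that by simp
    then show ?thesis
      unfolding f_def c_def a_def rhs_def power_0 mult_1_left by (rule ladder_0_of_real_exp [OF assms(1)])
  qed
  show ?thesis
    unfolding rhs_def [symmetric]
  proof (intro exI conjI allI impI)
    fix t :: real
    assume "\<bar>t\<bar> < \<delta>"
    with series [of "of_real t"]
    have "(\<lambda>n. complex_of_real (poly (pshift n) x * t ^ n / fact n)) sums of_real (rhs t)"
      by (simp add: at_center at_real)
    then show "(\<lambda>n. poly (pshift n) x * t ^ n / fact n) sums rhs t"
      by (simp only: sums_of_real_iff)
  qed (rule \<open>\<delta> > 0\<close>)
qed

end
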